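(* Let $n$ be a positive integer, $0\le m\le\lfloor n/2\rfloor$ and $0\le k\le m$. Let $M^{(n-m,m)}$ be the complex vector space with basis $\{e_\sigma\}$ indexed by the $m$-element subsets $\sigma$ of $\{1,\dots,n\}$, and let $\Omega=\{n-m+1,\dots,n\}$. Define the linear map $\pi:\mathbb{C}[S_n]\to M^{(n-m,m)}$ by $\pi(g)=e_{g(\Omega)}$ for $g\in S_n$. Let $T_k$ be the Young tableau of shape $(n-k,k)$ whose first row contains $1,\dots,n-k$ and whose second row contains $n-k+1,\dots,n$, with row subgroup $R(T_k)$ and column subgroup $C(T_k)$, and let $$c_k=\Big(\sum_{q\in C(T_k)}\operatorname{sgn}(q)\,q\Big)\Big(\sum_{p\in R(T_k)}p\Big)\in\mathbb{C}[S_n].$$ Then the coefficient of $e_\Omega$ in $\pi(c_k)$ is $(m-k)!\,k!\,(n-m)!$.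
   Context: The row subgroup $R(T_k)$ (resp. column subgroup $C(T_k)$) consists of the permutations of $\{1,\dots,n\}$ that preserve each row (resp. each column) of $T_k$ as a set. Products in the group ring are composition of permutations, $qp=q\circ p$. *)

theory Defs
  imports Complex_Main "HOL-Combinatorics.Permutations"
begin

definition Sym :: "nat \<Rightarrow> (nat \<Rightarrow> nat) set" where
  "Sym n = {g. g permutes {1..n}}"

text \<open>Elements of the group ring C[S_n] are functions from S_n to C
  (coefficient of each group element; zero outside S_n).\<close>
definition gr_mult :: "nat \<Rightarrow> ((nat \<Rightarrow> nat) \<Rightarrow> complex) \<Rightarrow> ((nat \<Rightarrow> nat) \<Rightarrow> complex)
    \<Rightarrow> ((nat \<Rightarrow> nat) \<Rightarrow> complex)" where
  "gr_mult n a b = (\<lambda>g. \<Sum>qp\<in>Sym n \<times> Sym n. if fst qp \<circ> snd qp = g then a (fst qp) * b (snd qp) else 0)"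

definition Omega :: "nat \<Rightarrow> nat \<Rightarrow> nat set" where
  "Omega n m = {n - m + 1..n}"

text \<open>An element of M^(n-m,m) is represented by its coefficient function on
  m-subsets sigma of {1..n}: pi_map n m a sigma is the coefficient of e_sigma.\<close>
definition pi_map :: "nat \<Rightarrow> nat \<Rightarrow> ((nat \<Rightarrow> nat) \<Rightarrow> complex) \<Rightarrow> nat set \<Rightarrow> complex" where
  "pi_map n m a = (\<lambda>\<sigma>. \<Sum>g\<in>Sym n. if g ` Omega n m = \<sigma> then a g else 0)"

definition cells :: "nat \<Rightarrow> nat \<Rightarrow> (nat \<times> nat) set" where
  "cells n k = {(1, j) | j. 1 \<le> j \<and> j \<le> n - k} \<union> {(2, j) | j. 1 \<le> j \<and> j \<le> k}"

definition T :: "nat \<Rightarrow> nat \<Rightarrow> nat \<times> nat \<Rightarrow> nat" where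
  "T n k c = (if fst c = 1 then snd c else n - k + snd c)"

definition tab_row :: "nat \<Rightarrow> nat \<Rightarrow> nat \<Rightarrow> nat set" where
  "tab_row n k i = {T n k c | c. c \<in> cells n k \<and> fst c = i}"

definition tab_col :: "nat \<Rightarrow> nat \<Rightarrow> nat \<Rightarrow> nat set" where
  "tab_col n k j = {T n k c | c. c \<in> cells n k \<and> snd c = j}"

definition row_group :: "nat \<Rightarrow> nat \<Rightarrow> (nat \<Rightarrow> nat) set" where
  "row_group n k = {p \<in> Sym n. \<forall>i. p ` tab_row n k i = tab_row n k i}"

definition col_group :: "nat \<Rightarrow> nat \<Rightarrow> (nat \<Rightarrow> nat) set" where
  "col_group n k = {q \<in> Sym n. \<forall>j. q ` tab_col n k j = tab_col n k j}"

definition col_antisym :: "nat \<Rightarrow> nat \<Rightarrow> (nat \<Rightarrow> nat) \<Rightarrow> complex" where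
  "col_antisym n k = (\<lambda>q. if q \<in> col_group n k then of_int (sign q) else 0)"

definition row_sym :: "nat \<Rightarrow> nat \<Rightarrow> (nat \<Rightarrow> nat) \<Rightarrow> complex" where
  "row_sym n k = (\<lambda>p. if p \<in> row_group n k then 1 else 0)"

definition young_c :: "nat \<Rightarrow> nat \<Rightarrow> (nat \<Rightarrow> nat) \<Rightarrow> complex" where
  "young_c n k = gr_mult n (col_antisym n k) (row_sym n k)"

end

theory Submission
  imports Defs "HOL-Library.Disjoint_Sets"
begin

(*
  The coefficient of e_Omega in pi(c_k) is the sum of sgn q over the pairs q in C(T_k),
  p in R(T_k) with (q o p)(Omega) = Omega. Such a p stabilises the second row {n-k+1..n},
  which lies inside Omega, so q maps each second-row entry n-k+j into the intersection of
  Omega with its column {j, n-k+j}, i.e. q fixes n-k+j; being a bijection of each column,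
  q then fixes the whole tableau: q = id. The coefficient therefore counts the p in R(T_k)
  with p(Omega) = Omega, which are exactly the permutations stabilising each of the blocks
  {1..n-m}, {n-m+1..n-k}, {n-k+1..n}; there are (n-m)! (m-k)! k! of them.
*)

lemma permutes_image_disjoint:
  assumes "f permutes A" "Z \<inter> A = {}"
  shows "f ` Z = Z"
proof -
  have "\<forall>x\<in>Z. f x = x"
    using assms by (meson disjoint_iff permutes_not_in)
  then show ?thesis
    by simp
qed

lemma restrict_id_comp_permutes_disjoint:
  assumes f: "f permutes A" and g: "g permutes B" and "A \<inter> B = {}"
  shows "restrict_id (f \<circ> g) A = f" and "restrict_id (f \<circ> g) B = g"
proof -
  show "restrict_id (f \<circ> g) A = f"
  proof
    fix x show "restrict_id (f \<circ> g) A x = f x"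
      using assms by (cases "x \<in> A") (auto simp: permutes_not_in disjoint_iff)
  qed
  show "restrict_id (f \<circ> g) B = g"
  proof
    fix x show "restrict_id (f \<circ> g) B x = g x"
      using assms permutes_in_image[OF g, of x]
      by (cases "x \<in> B") (auto simp: permutes_not_in disjoint_iff intro: permutes_not_in[OF f])
  qed
qed

lemma permutes_stabilising_decompose:
  assumes p: "p permutes A \<union> B" and pA: "p ` A = A" and "A \<inter> B = {}"
  shows "restrict_id p A permutes A" "restrict_id p B permutes B"
    and "p = restrict_id p A \<circ> restrict_id p B"
proof -
  have "B = (A \<union> B) - A"
    using assms(3) by blast
  then have pB: "p ` B = B"
    using pA permutes_image[OF p] image_set_diff[OF permutes_inj[OF p]] by metis
  show "restrict_id p A permutes A" "restrict_id p B permutes B"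
    using pA pB permutes_inj[OF p]
    by (auto intro!: permutes_restrict_id simp: bij_betw_def inj_on_def)
  show "p = restrict_id p A \<circ> restrict_id p B"
  proof
    fix x
    show "p x = (restrict_id p A \<circ> restrict_id p B) x"
    proof (cases "x \<in> B")
      case True
      then have "p x \<notin> A"
        using pB assms(3) by blast
      then show ?thesis
        using True by simp
    next
      case False
      then show ?thesis
        by (cases "x \<in> A") (auto simp: permutes_not_in[OF p])
    qed
  qed
qed

lemma card_permutes_Un_stabilising:
  assumes "finite A" and disj: "A \<inter> B = {}" and sub: "\<And>Y. Y \<in> \<Y> \<Longrightarrow> Y \<subseteq> B"
  shows "card {p. p permutes A \<union> B \<and> p ` A = A \<and> (\<forall>Y\<in>\<Y>. p ` Y = Y)}
    = fact (card A) * card {g. g permutes B \<and> (\<forall>Y\<in>\<Y>. g ` Y = Y)}"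
proof -
  let ?F = "{f. f permutes A}"
  let ?G = "{g. g permutes B \<and> (\<forall>Y\<in>\<Y>. g ` Y = Y)}"
  let ?P = "{p. p permutes A \<union> B \<and> p ` A = A \<and> (\<forall>Y\<in>\<Y>. p ` Y = Y)}"
  have "bij_betw (\<lambda>(f, g). f \<circ> g) (?F \<times> ?G) ?P"
  proof (rule bij_betwI')
    fix x y assume "x \<in> ?F \<times> ?G" "y \<in> ?F \<times> ?G"
    then obtain f1 g1 f2 g2 where xy: "x = (f1, g1)" "y = (f2, g2)"
      and perms: "f1 permutes A" "g1 permutes B" "f2 permutes A" "g2 permutes B"
      by blast
    show "((\<lambda>(f, g). f \<circ> g) x = (\<lambda>(f, g). f \<circ> g) y) = (x = y)"
      using restrict_id_comp_permutes_disjoint[OF perms(1,2) disj]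
        restrict_id_comp_permutes_disjoint[OF perms(3,4) disj]
      unfolding xy case_prod_conv by (metis prod.inject)
  next
    fix x assume "x \<in> ?F \<times> ?G"
    then obtain f g where x: "x = (f, g)" and f: "f permutes A" and g: "g \<in> ?G"
      by blast
    have "f permutes A \<union> B" "g permutes A \<union> B"
      using f g by (auto intro: permutes_subset)
    moreover have "(f \<circ> g) ` A = A"
      unfolding image_comp[symmetric]
      using permutes_image_disjoint[of g B A] permutes_image[OF f] g disj by auto
    moreover have "(f \<circ> g) ` Y = Y" if "Y \<in> \<Y>" for Y
      unfolding image_comp[symmetric]
      using that g sub disj permutes_image_disjoint[OF f, of Y] by auto
    ultimately show "(\<lambda>(f, g). f \<circ> g) x \<in> ?P"
      unfolding x case_prod_conv mem_Collect_eq by (blast intro: permutes_compose)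
  next
    fix p assume "p \<in> ?P"
    then have p: "p permutes A \<union> B" "p ` A = A" and pY: "\<forall>Y\<in>\<Y>. p ` Y = Y"
      by auto
    have "restrict_id p B ` Y = Y" if "Y \<in> \<Y>" for Y
    proof -
      have "restrict_id p B ` Y = p ` Y"
        using sub[OF that] by (intro image_cong) auto
      with pY that show ?thesis
        by simp
    qed
    with permutes_stabilising_decompose[OF p disj]
    show "\<exists>x\<in>?F \<times> ?G. p = (\<lambda>(f, g). f \<circ> g) x"
      by (intro bexI[of _ "(restrict_id p A, restrict_id p B)"]) (simp_all only: case_prod_conv, blast)
  qed
  then have "card ?P = card (?F \<times> ?G)"
    by (rule bij_betw_same_card[symmetric])
  then have "card ?P = card ?F * card ?G"
    by (simp only: card_cartesian_product)
  then show ?thesis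
    using card_permutations[OF refl \<open>finite A\<close>] by simp
qed

lemma card_permutes_stabilising_family:
  assumes "finite I" and "\<And>i. i \<in> I \<Longrightarrow> finite (P i)" and "disjoint_family_on P I"
  shows "card {p. p permutes (\<Union>i\<in>I. P i) \<and> (\<forall>i\<in>I. p ` P i = P i)} = (\<Prod>i\<in>I. fact (card (P i)))"
  using assms
proof (induction I rule: finite_induct)
  case empty
  then show ?case
    by simp
next
  case (insert i I)
  then have disj: "P i \<inter> (\<Union>j\<in>I. P j) = {}" and "disjoint_family_on P I"
    by (simp_all add: disjoint_family_on_insert)
  have "{p. p permutes (\<Union>j\<in>insert i I. P j) \<and> (\<forall>j\<in>insert i I. p ` P j = P j)}
      = {p. p permutes P i \<union> (\<Union>j\<in>I. P j) \<and> p ` P i = P i \<and> (\<forall>Y\<in>P ` I. p ` Y = Y)}"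
    by auto
  then have "card {p. p permutes (\<Union>j\<in>insert i I. P j) \<and> (\<forall>j\<in>insert i I. p ` P j = P j)}
      = fact (card (P i)) * card {g. g permutes (\<Union>j\<in>I. P j) \<and> (\<forall>j\<in>I. g ` P j = P j)}"
    using card_permutes_Un_stabilising[OF _ disj, of "P ` I"] insert.prems by auto
  then show ?case
    using insert.IH[OF _ \<open>disjoint_family_on P I\<close>] insert by simp
qed

lemma finite_Sym: "finite (Sym n)"
  unfolding Sym_def by (rule finite_permutations) simp

lemma comp_in_Sym: "q \<in> Sym n \<Longrightarrow> p \<in> Sym n \<Longrightarrow> q \<circ> p \<in> Sym n"
  unfolding Sym_def by (auto intro: permutes_compose)

lemma pi_map_gr_mult:
  "pi_map n m (gr_mult n a b) \<sigma>
    = (\<Sum>(q, p)\<in>Sym n \<times> Sym n. if (q \<circ> p) ` Omega n m = \<sigma> then a q * b p else 0)"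
proof -
  have "pi_map n m (gr_mult n a b) \<sigma> = (\<Sum>g\<in>Sym n. \<Sum>(q, p)\<in>Sym n \<times> Sym n.
      if q \<circ> p = g then (if g ` Omega n m = \<sigma> then a q * b p else 0) else 0)"
    unfolding pi_map_def gr_mult_def case_prod_beta
    by (intro sum.cong refl) (simp add: sum.If_cases if_if_eq_conj)
  also have "\<dots> = (\<Sum>(q, p)\<in>Sym n \<times> Sym n. \<Sum>g\<in>Sym n.
      if q \<circ> p = g then (if g ` Omega n m = \<sigma> then a q * b p else 0) else 0)"
    unfolding case_prod_beta by (rule sum.swap)
  also have "\<dots> = (\<Sum>(q, p)\<in>Sym n \<times> Sym n. if (q \<circ> p) ` Omega n m = \<sigma> then a q * b p else 0)"
    by (intro sum.cong refl) (auto simp: finite_Sym comp_in_Sym)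
  finally show ?thesis .
qed

lemma tab_row_eq:
  assumes "k \<le> n"
  shows "tab_row n k i = (if i = 1 then {1..n-k} else if i = 2 then {n-k+1..n} else {})"
proof -
  have "x \<in> tab_row n k 2" if "x \<in> {n-k+1..n}" for x
    unfolding tab_row_def cells_def T_def
    using that assms by (intro CollectI exI[of _ "(2, x - (n-k))"]) auto
  then show ?thesis
    using assms unfolding tab_row_def cells_def T_def by auto
qed

lemma row_group_iff:
  assumes "k \<le> n"
  shows "p \<in> row_group n k \<longleftrightarrow>
    p \<in> Sym n \<and> p ` {1..n-k} = {1..n-k} \<and> p ` {n-k+1..n} = {n-k+1..n}"
proof -
  have "p ` tab_row n k i = tab_row n k i" if "i \<noteq> 1" "i \<noteq> 2" for i
    using that by (simp add: tab_row_eq[OF assms])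
  then have "(\<forall>i. p ` tab_row n k i = tab_row n k i) \<longleftrightarrow>
      p ` tab_row n k 1 = tab_row n k 1 \<and> p ` tab_row n k 2 = tab_row n k 2"
    by metis
  then show ?thesis
    unfolding row_group_def by (simp add: tab_row_eq[OF assms])
qed

lemma T_in_tab_col: "c \<in> cells n k \<Longrightarrow> T n k c \<in> tab_col n k (snd c)"
  unfolding tab_col_def by blast

lemma tab_col_eq:
  assumes "2 * k \<le> n" "1 \<le> j" "j \<le> n - k"
  shows "tab_col n k j = (if j \<le> k then {j, n-k+j} else {j})"
proof -
  have "j \<in> tab_col n k j"
    using T_in_tab_col[of "(1, j)" n k] assms by (simp add: cells_def T_def)
  moreover have "n-k+j \<in> tab_col n k j" if "j \<le> k"
    using T_in_tab_col[of "(2, j)" n k] assms that by (simp add: cells_def T_def)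
  moreover have "tab_col n k j \<subseteq> {j, n-k+j}" "k < j \<Longrightarrow> tab_col n k j \<subseteq> {j}"
    unfolding tab_col_def cells_def T_def by auto
  ultimately show ?thesis
    by auto
qed

lemma col_factor_eq_id:
  assumes "k \<le> m" "k + m \<le> n"
    and q: "q \<in> col_group n k" and p: "p \<in> row_group n k"
    and stab: "(q \<circ> p) ` Omega n m = Omega n m"
  shows "q = id"
proof -
  have kn: "2 * k \<le> n" "k \<le> n"
    using assms(1,2) by linarith+
  have q_perm: "q permutes {1..n}" and q_col: "\<And>x j. x \<in> tab_col n k j \<Longrightarrow> q x \<in> tab_col n k j"
    using q by (auto simp: col_group_def Sym_def)
  have col: "tab_col n k j = {j, n-k+j}" if "1 \<le> j" "j \<le> k" for j
    using tab_col_eq[OF kn(1) that(1)] that kn by simp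
  have "{n-k+1..n} \<subseteq> Omega n m"
    using assms(1) unfolding Omega_def by auto
  have "q ` {n-k+1..n} = q ` p ` {n-k+1..n}"
    using p row_group_iff[OF kn(2)] by simp
  also have "\<dots> \<subseteq> q ` p ` Omega n m"
    using \<open>{n-k+1..n} \<subseteq> Omega n m\<close> by (intro image_mono)
  also have "\<dots> = Omega n m"
    using stab by (simp add: image_comp)
  finally have row2: "q ` {n-k+1..n} \<subseteq> Omega n m" .
  have fix_row2: "q (n-k+j) = n-k+j" if "1 \<le> j" "j \<le> k" for j
  proof -
    have "n-k+j \<in> {n-k+1..n}"
      using that kn by auto
    then have "q (n-k+j) \<in> Omega n m"
      using row2 by blast
    moreover have "q (n-k+j) \<in> {j, n-k+j}"
      using q_col[of "n-k+j" j] col[OF that] by simp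
    moreover have "j \<notin> Omega n m"
      using that assms(2) unfolding Omega_def by auto
    ultimately show ?thesis
      by auto
  qed
  have fix_row1: "q j = j" if "1 \<le> j" "j \<le> k" for j
  proof -
    have "q j \<in> {j, n-k+j}"
      using q_col[of j j] col[OF that] by simp
    moreover have "j \<noteq> n-k+j"
      using that kn by simp
    then have "q j \<noteq> q (n-k+j)"
      using permutes_inj[OF q_perm] by (simp add: inj_eq)
    ultimately show ?thesis
      using fix_row2[OF that] by auto
  qed
  show "q = id"
  proof
    fix x
    consider "x \<notin> {1..n}" | "1 \<le> x" "x \<le> k" | "k < x" "x \<le> n - k" | "n - k < x" "x \<le> n"
      by (meson atLeastAtMost_iff not_le)
    then show "q x = id x"
    proof cases
      case 1
      then show ?thesis
        by (simp add: permutes_not_in[OF q_perm])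
    next
      case 2
      then show ?thesis
        by (simp add: fix_row1)
    next
      case 3
      then show ?thesis
        using q_col[of x x] tab_col_eq[OF kn(1), of x] by simp
    next
      case 4
      then show ?thesis
        using fix_row2[of "x - (n-k)"] by simp
    qed
  qed
qed

lemma row_group_stabiliser_Omega_iff:
  assumes "k \<le> m" "k + m \<le> n"
  shows "p \<in> row_group n k \<and> p ` Omega n m = Omega n m \<longleftrightarrow> p permutes {1..n}
    \<and> p ` {1..n-m} = {1..n-m} \<and> p ` {n-m+1..n-k} = {n-m+1..n-k} \<and> p ` {n-k+1..n} = {n-k+1..n}"
proof (cases "p permutes {1..n}")
  case False
  then show ?thesis
    by (simp add: row_group_def Sym_def)
next
  case True
  note inj = permutes_inj[OF True]
  have split: "{1..n-k} = {1..n-m} \<union> {n-m+1..n-k}" "Omega n m = {n-m+1..n-k} \<union> {n-k+1..n}"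
    and cut: "{1..n-m} = {1..n-k} - Omega n m" "{n-m+1..n-k} = {1..n-k} \<inter> Omega n m"
    using assms by (auto simp: Omega_def)
  have "p ` {1..n-k} = {1..n-k} \<and> p ` {n-k+1..n} = {n-k+1..n} \<and> p ` Omega n m = Omega n m
      \<longleftrightarrow> p ` {1..n-m} = {1..n-m} \<and> p ` {n-m+1..n-k} = {n-m+1..n-k} \<and> p ` {n-k+1..n} = {n-k+1..n}"
  proof
    assume "p ` {1..n-k} = {1..n-k} \<and> p ` {n-k+1..n} = {n-k+1..n} \<and> p ` Omega n m = Omega n m"
    then show "p ` {1..n-m} = {1..n-m} \<and> p ` {n-m+1..n-k} = {n-m+1..n-k} \<and> p ` {n-k+1..n} = {n-k+1..n}"
      by (simp only: cut image_set_diff[OF inj] image_Int[OF inj])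
  next
    assume "p ` {1..n-m} = {1..n-m} \<and> p ` {n-m+1..n-k} = {n-m+1..n-k} \<and> p ` {n-k+1..n} = {n-k+1..n}"
    then show "p ` {1..n-k} = {1..n-k} \<and> p ` {n-k+1..n} = {n-k+1..n} \<and> p ` Omega n m = Omega n m"
      by (simp only: split image_Un)
  qed
  then show ?thesis
    using True row_group_iff[of k n p] assms by (simp add: Sym_def)
qed

lemma card_row_group_stabiliser_Omega:
  assumes "k \<le> m" "k + m \<le> n"
  shows "card {p \<in> row_group n k. p ` Omega n m = Omega n m} = fact (n - m) * fact (m - k) * fact k"
proof -
  define X where "X = [{1..n-m}, {n-m+1..n-k}, {n-k+1..n}]"
  have "(\<Union>i\<in>{0,1,2}. X!i) = {1..n}" and disj: "disjoint_family_on ((!) X) {0,1,2}"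
    using assms by (auto simp: X_def disjoint_family_on_def)
  then have "{p \<in> row_group n k. p ` Omega n m = Omega n m}
      = {p. p permutes (\<Union>i\<in>{0,1,2}. X!i) \<and> (\<forall>i\<in>{0,1,2}. p ` (X!i) = X!i)}"
    using row_group_stabiliser_Omega_iff[OF assms] by (simp add: X_def)
  also have "card \<dots> = (\<Prod>i\<in>{0,1,2}. fact (card (X!i)))"
    by (rule card_permutes_stabilising_family) (use disj in \<open>auto simp: X_def\<close>)
  also have "\<dots> = fact (n - m) * fact (m - k) * fact k"
    using assms by (simp add: X_def)
  finally show ?thesis .
qed

lemma young_c_summand_at_Omega:
  assumes "k \<le> m" "k + m \<le> n"
  shows "(if (q \<circ> p) ` Omega n m = Omega n m then col_antisym n k q * row_sym n k p else 0)
    = of_bool (q = id \<and> p \<in> row_group n k \<and> p ` Omega n m = Omega n m)"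
proof (cases "q \<in> col_group n k \<and> p \<in> row_group n k \<and> (q \<circ> p) ` Omega n m = Omega n m")
  case True
  then have "q = id"
    using col_factor_eq_id[OF assms] by blast
  with True show ?thesis
    by (simp add: col_antisym_def row_sym_def)
next
  case False
  have "id \<in> col_group n k"
    by (simp add: col_group_def Sym_def)
  with False show ?thesis
    by (auto simp: col_antisym_def row_sym_def)
qed

theorem lemma5:
  fixes n m k :: nat
  assumes "0 < n" and "m \<le> n div 2" and "k \<le> m"
  shows "pi_map n m (young_c n k) (Omega n m) = of_nat (fact (m - k) * fact k * fact (n - m))"
proof -
  have bounds: "k \<le> m" "k + m \<le> n"
    using assms(2,3) by presburger+
  let ?P = "{id :: nat \<Rightarrow> nat} \<times> {p \<in> row_group n k. p ` Omega n m = Omega n m}"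
  have summand: "(if (q \<circ> p) ` Omega n m = Omega n m then col_antisym n k q * row_sym n k p else 0)
      = of_bool ((q, p) \<in> ?P)" for q p
    by (subst young_c_summand_at_Omega[OF bounds]) simp
  have "pi_map n m (young_c n k) (Omega n m)
      = (\<Sum>(q, p)\<in>Sym n \<times> Sym n. of_bool ((q, p) \<in> ?P))"
    unfolding young_c_def pi_map_gr_mult summand ..
  also have "\<dots> = (\<Sum>x\<in>Sym n \<times> Sym n. of_bool (x \<in> ?P))"
    by (intro sum.cong refl) (simp only: case_prod_beta prod.collapse)
  also have "\<dots> = of_nat (card (Sym n \<times> Sym n \<inter> {x. x \<in> ?P}))"
    by (intro sum_of_bool_eq finite_cartesian_product finite_Sym)
  also have "\<dots> = of_nat (card (?P))"
  proof -
    have "?P \<subseteq> Sym n \<times> Sym n"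
      by (auto simp: row_group_def Sym_def)
    then show ?thesis
      by (simp only: Collect_mem_eq Int_absorb1)
  qed
  also have "\<dots> = of_nat (fact (m - k) * fact k * fact (n - m))"
    using card_row_group_stabiliser_Omega[OF bounds] by (simp add: card_cartesian_product)
  finally show ?thesis .
qed

end
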